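(* Let $a_2>0$ and consider the two-link parallel network with unit demand and latencies $\ell_1(x_1)=x_1$, $\ell_2(x_2)=a_2x_2$. Then every $t\in\mathcal{T}(\infty)$ equals $t=\left(\frac{2a_2+1}{3},\frac{a_2+2}{3}\right)$, and for this $t$, $$\frac{C(x(t))}{C(x^* )}=\frac{a_2^2+7a_2+1}{9a_2},$$ where $x^*$ is the optimal flow. In particular this ratio tends to $\infty$ as $a_2\to\infty$.
   Context: Flows $x\in\mathbb{R}^2_+$ with $x_1+x_2=1$; $C(x)=\sum_i\ell_i(x_i)x_i$; $x^*$ minimizes $C$. For tolls $t\in\mathbb{R}^2_+$, $x(t)$ is the unique Wardrop equilibrium for $t$ (for all $i,j$ with $x_i>0$: $\ell_i(x_i)+t_i\le\ell_j(x_j)+t_j$). Profit $\Pi_i(t)=t_ix_i(t)$. $\mathcal{T}(\infty)$: the set of toll vectors $t\in\mathbb{R}^2_+$ such that for every $i$ and every $t'_i\ge0$, $\Pi_i(t_i,t_{-i})\ge\Pi_i(t'_i,t_{-i})$ (flow recomputed). *)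

theory Defs
  imports "HOL-Analysis.Analysis"
begin

definition lat :: "real \<Rightarrow> 2 \<Rightarrow> real \<Rightarrow> real" where
  "lat a2 i y = (if i = 1 then y else a2 * y)"

definition feasible :: "real^2 \<Rightarrow> bool" where
  "feasible x \<longleftrightarrow> (\<forall>i. x$i \<ge> 0) \<and> x$1 + x$2 = 1"

definition total_cost :: "real \<Rightarrow> real^2 \<Rightarrow> real" where
  "total_cost a2 x = (\<Sum>i\<in>UNIV. lat a2 i (x$i) * x$i)"

definition is_opt :: "real \<Rightarrow> real^2 \<Rightarrow> bool" where
  "is_opt a2 x \<longleftrightarrow> feasible x \<and> (\<forall>y. feasible y \<longrightarrow> total_cost a2 x \<le> total_cost a2 y)"

definition opt_flow :: "real \<Rightarrow> real^2" where
  "opt_flow a2 = (THE x. is_opt a2 x)"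

definition wardrop :: "real \<Rightarrow> real^2 \<Rightarrow> real^2 \<Rightarrow> bool" where
  "wardrop a2 t x \<longleftrightarrow> feasible x \<and>
     (\<forall>i j. x$i > 0 \<longrightarrow> lat a2 i (x$i) + t$i \<le> lat a2 j (x$j) + t$j)"

definition eq_flow :: "real \<Rightarrow> real^2 \<Rightarrow> real^2" where
  "eq_flow a2 t = (THE x. wardrop a2 t x)"

definition profit :: "real \<Rightarrow> 2 \<Rightarrow> real^2 \<Rightarrow> real" where
  "profit a2 i t = t$i * (eq_flow a2 t)$i"

definition vupd :: "real^2 \<Rightarrow> 2 \<Rightarrow> real \<Rightarrow> real^2" where
  "vupd t i v = (\<chi> j. if j = i then v else t$j)"

text \<open>T(infinity): toll vectors that are Nash equilibria of the pricing game.\<close>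
definition toll_NE :: "real \<Rightarrow> (real^2) set" where
  "toll_NE a2 = {t. (\<forall>i. t$i \<ge> 0) \<and>
     (\<forall>i t'. t' \<ge> 0 \<longrightarrow> profit a2 i t \<ge> profit a2 i (vupd t i t'))}"

end

theory Submission
  imports Defs "HOL-Real_Asymp.Real_Asymp"
begin

text \<open>With toll difference \<open>d = t\<^sub>1 - t\<^sub>2\<close>, the Wardrop equilibrium sends the share
  \<open>(a\<^sub>2 - d) / (1 + a\<^sub>2)\<close>, clamped to \<open>[0, 1]\<close>, over link 1. As long as that share is
  strictly between 0 and 1, each operator's profit is a concave quadratic in its own toll,
  \<open>t\<^sub>1 (a\<^sub>2 + t\<^sub>2 - t\<^sub>1)\<close> resp. \<open>t\<^sub>2 (1 + t\<^sub>1 - t\<^sub>2)\<close> up to the factor \<open>1 / (1 + a\<^sub>2)\<close>, and both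
  profits can be made positive, which forces any toll equilibrium to be interior. The
  first-order conditions \<open>a\<^sub>2 + t\<^sub>2 = 2 t\<^sub>1\<close> and \<open>1 + t\<^sub>1 = 2 t\<^sub>2\<close> then determine the tolls, and
  the cost ratio is a direct computation against the optimum \<open>x\<^sup>* = (a\<^sub>2, 1) / (1 + a\<^sub>2)\<close>.\<close>

definition split_flow :: "real \<Rightarrow> real^2" where
  "split_flow s = (\<chi> i. if i = 1 then s else 1 - s)"

definition link1_share :: "real \<Rightarrow> real \<Rightarrow> real" where
  "link1_share a d = max 0 (min 1 ((a - d) / (1 + a)))"

lemma split_flow_nth [simp]: "split_flow s $ 1 = s" "split_flow s $ 2 = 1 - s"
  by (simp_all add: split_flow_def)

lemma feasible_iff_split_flow: "feasible x \<longleftrightarrow> x = split_flow (x$1) \<and> 0 \<le> x$1 \<and> x$1 \<le> 1"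
  by (auto simp: feasible_def vec_eq_iff forall_2)

lemma eq_unit_clamp_iff:
  fixes s q :: real
  assumes "0 \<le> s" "s \<le> 1"
  shows "s = max 0 (min 1 q) \<longleftrightarrow> (0 < s \<longrightarrow> s \<le> q) \<and> (s < 1 \<longrightarrow> q \<le> s)"
  using assms by (auto simp: max_def min_def)

lemma link1_share_bounds: "0 \<le> link1_share a d" "link1_share a d \<le> 1"
  by (simp_all add: link1_share_def)

lemma link1_share_interior:
  assumes "-1 < d" "d < a"
  shows "link1_share a d = (a - d) / (1 + a)"
  using assms by (simp add: link1_share_def field_simps)

lemma link1_share_pos_iff: "a > -1 \<Longrightarrow> 0 < link1_share a d \<longleftrightarrow> d < a"
  unfolding link1_share_def by (simp add: less_max_iff_disj zero_less_divide_iff)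

lemma link1_share_less_one_iff: "a > -1 \<Longrightarrow> link1_share a d < 1 \<longleftrightarrow> -1 < d"
  unfolding link1_share_def by (simp add: min_less_iff_disj divide_less_eq)

lemma wardrop_iff:
  assumes "a > 0"
  shows "wardrop a t x \<longleftrightarrow> x = split_flow (link1_share a (t$1 - t$2))"
proof -
  define q where "q = (a - (t$1 - t$2)) / (1 + a)"
  have pos: "1 + a > 0" using assms by simp
  have "wardrop a t x \<longleftrightarrow> feasible x \<and> (x$1 > 0 \<longrightarrow> x$1 + t$1 \<le> a * x$2 + t$2)
                                   \<and> (x$2 > 0 \<longrightarrow> a * x$2 + t$2 \<le> x$1 + t$1)"
    by (auto simp: wardrop_def lat_def forall_2)
  also have "\<dots> \<longleftrightarrow> feasible x \<and> (0 < x$1 \<longrightarrow> x$1 \<le> q) \<and> (x$1 < 1 \<longrightarrow> q \<le> x$1)"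
  proof (cases "feasible x")
    case True
    then have x2: "x$2 = 1 - x$1" by (simp add: feasible_def)
    have "x$1 + t$1 \<le> a * x$2 + t$2 \<longleftrightarrow> x$1 \<le> q"
      using pos unfolding x2 q_def by (simp add: le_divide_eq algebra_simps)
    moreover have "a * x$2 + t$2 \<le> x$1 + t$1 \<longleftrightarrow> q \<le> x$1"
      using pos unfolding x2 q_def by (simp add: divide_le_eq algebra_simps)
    ultimately show ?thesis using x2 by auto
  qed simp
  also have "\<dots> \<longleftrightarrow> x = split_flow (link1_share a (t$1 - t$2))"
    using eq_unit_clamp_iff[of "x$1" q] link1_share_bounds[of a "t$1 - t$2"]
    unfolding feasible_iff_split_flow link1_share_def q_def by auto
  finally show ?thesis .
qed

lemma eq_flow_eq:
  assumes "a > 0"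
  shows "eq_flow a t = split_flow (link1_share a (t$1 - t$2))"
  unfolding eq_flow_def by (rule the_equality) (simp_all add: wardrop_iff[OF assms])

lemma profit_link1: "a > 0 \<Longrightarrow> profit a 1 t = t$1 * link1_share a (t$1 - t$2)"
  by (simp add: profit_def eq_flow_eq)

lemma profit_link2: "a > 0 \<Longrightarrow> profit a 2 t = t$2 * (1 - link1_share a (t$1 - t$2))"
  by (simp add: profit_def eq_flow_eq)

lemma total_cost_split_flow:
  assumes "a > -1"
  shows "total_cost a (split_flow s) = (a + ((1 + a) * s - a)\<^sup>2) / (1 + a)"
  using assms by (simp add: total_cost_def sum_2 lat_def divide_simps power2_eq_square) algebra

lemma opt_flow_eq:
  assumes "a > 0"
  shows "opt_flow a = split_flow (a / (1 + a))"
  unfolding opt_flow_def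
proof (rule the_equality)
  have pos: "1 + a > 0" using assms by simp
  have cost_ge: "total_cost a (split_flow (a / (1 + a))) \<le> total_cost a (split_flow s)" for s
    using pos by (simp add: total_cost_split_flow divide_right_mono)
  show opt: "is_opt a (split_flow (a / (1 + a)))"
    unfolding is_opt_def
  proof (intro conjI allI impI)
    show "feasible (split_flow (a / (1 + a)))"
      using assms by (simp add: feasible_def forall_2)
    fix y assume "feasible y"
    then have "y = split_flow (y$1)" unfolding feasible_iff_split_flow by (elim conjE)
    then show "total_cost a (split_flow (a / (1 + a))) \<le> total_cost a y"
      using cost_ge by metis
  qed
  fix x assume "is_opt a x"
  then have "x = split_flow (x$1)"
    and le: "total_cost a x \<le> total_cost a (split_flow (a / (1 + a)))"
    using opt unfolding is_opt_def feasible_iff_split_flow by (elim conjE, blast)+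
  have "((1 + a) * x$1 - a)\<^sup>2 \<le> 0"
    using le pos by (subst (asm) \<open>x = split_flow (x$1)\<close>)
      (simp add: total_cost_split_flow divide_le_cancel)
  then have "x$1 = a / (1 + a)"
    using pos by (simp add: eq_divide_eq mult.commute)
  then show "x = split_flow (a / (1 + a))" using \<open>x = split_flow (x$1)\<close> by simp
qed

lemma profit_link1_interior:
  assumes "a > 0" "-1 < t$1 - t$2" "t$1 - t$2 < a"
  shows "profit a 1 t = t$1 * (a + t$2 - t$1) / (1 + a)"
  using assms by (simp add: profit_link1 link1_share_interior)

lemma profit_link2_interior:
  assumes "a > 0" "-1 < t$1 - t$2" "t$1 - t$2 < a"
  shows "profit a 2 t = t$2 * (1 + t$1 - t$2) / (1 + a)"
  using assms by (simp add: profit_link2 link1_share_interior field_simps)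

lemma quadratic_local_max:
  fixes c p d :: real
  assumes "0 < d" and "\<And>y. \<bar>y - p\<bar> < d \<Longrightarrow> y * (c - y) \<le> p * (c - p)"
  shows "c = 2 * p"
proof -
  have "((\<lambda>y. y * (c - y)) has_real_derivative c - 2 * p) (at p)"
    by (auto intro!: derivative_eq_intros)
  moreover have "\<forall>y. \<bar>p - y\<bar> < d \<longrightarrow> y * (c - y) \<le> p * (c - p)"
    using assms(2) by (simp add: abs_minus_commute)
  ultimately have "c - 2 * p = 0" using DERIV_local_max assms(1) by blast
  then show ?thesis by simp
qed

lemma toll_NE_nonneg: "t \<in> toll_NE a \<Longrightarrow> 0 \<le> t$i"
  by (simp add: toll_NE_def)

lemma toll_NE_best_response:
  "t \<in> toll_NE a \<Longrightarrow> 0 \<le> y \<Longrightarrow> profit a i (vupd t i y) \<le> profit a i t"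
  by (simp add: toll_NE_def)

lemma vupd_nth [simp]:
  "vupd t 1 y $ 1 = y" "vupd t 1 y $ 2 = t$2" "vupd t 2 y $ 1 = t$1" "vupd t 2 y $ 2 = y"
  by (simp_all add: vupd_def)

text \<open>Either operator earns a positive profit by undercutting, e.g. with \<open>(a\<^sub>2 + t\<^sub>2) / 2\<close>
  resp. \<open>(1 + t\<^sub>1) / 2\<close>; so in equilibrium both tolls and both link flows are positive.\<close>

lemma toll_NE_interior:
  assumes "a > 0" and t: "t \<in> toll_NE a"
  shows "0 < t$1" "0 < t$2" "-1 < t$1 - t$2" "t$1 - t$2 < a"
proof -
  have a: "a > -1" using assms by simp
  let ?s = "link1_share a (t$1 - t$2)"
  define y where "y = (a + t$2) / 2"
  have "0 < y" "y - t$2 < a" using assms toll_NE_nonneg[OF t, of 2] by (simp_all add: y_def)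
  then have "0 < profit a 1 (vupd t 1 y)"
    using assms by (simp add: profit_link1 link1_share_pos_iff[OF a])
  also have "\<dots> \<le> profit a 1 t" using toll_NE_best_response[OF t] \<open>0 < y\<close> by simp
  also have "\<dots> = t$1 * ?s" using assms by (simp add: profit_link1)
  finally show "0 < t$1" "t$1 - t$2 < a"
    using toll_NE_nonneg[OF t, of 1] link1_share_bounds(1)[of a "t$1 - t$2"]
      link1_share_pos_iff[OF a, of "t$1 - t$2"]
    by (auto simp: zero_less_mult_iff)
  define z where "z = (1 + t$1) / 2"
  have "0 < z" using toll_NE_nonneg[OF t, of 1] unfolding z_def by simp
  have "-1 < t$1 - z" using toll_NE_nonneg[OF t, of 1] unfolding z_def by (simp add: field_simps)
  with \<open>0 < z\<close> have "0 < profit a 2 (vupd t 2 z)"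
    using assms by (simp add: profit_link2 link1_share_less_one_iff[OF a])
  also have "\<dots> \<le> profit a 2 t" using toll_NE_best_response[OF t] \<open>0 < z\<close> by simp
  also have "\<dots> = t$2 * (1 - ?s)" using assms by (simp add: profit_link2)
  finally show "0 < t$2" "-1 < t$1 - t$2"
    using toll_NE_nonneg[OF t, of 2] link1_share_bounds(2)[of a "t$1 - t$2"]
      link1_share_less_one_iff[OF a, of "t$1 - t$2"]
    by (auto simp: zero_less_mult_iff)
qed

lemma toll_NE_first_order_link1:
  assumes a: "a > 0" and t: "t \<in> toll_NE a"
  shows "a + t$2 = 2 * t$1"
proof (rule quadratic_local_max)
  note int = toll_NE_interior[OF a t]
  show "0 < min (t$1) (min (a - (t$1 - t$2)) (1 + (t$1 - t$2)))" using int by simp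
  fix y assume "\<bar>y - t$1\<bar> < min (t$1) (min (a - (t$1 - t$2)) (1 + (t$1 - t$2)))"
  then have y: "0 < y" "-1 < y - t$2" "y - t$2 < a" by auto
  have "y * (a + t$2 - y) / (1 + a) = profit a 1 (vupd t 1 y)"
    using a y by (simp add: profit_link1_interior)
  also have "\<dots> \<le> profit a 1 t" using toll_NE_best_response[OF t] y by simp
  also have "\<dots> = t$1 * (a + t$2 - t$1) / (1 + a)" using a int by (simp add: profit_link1_interior)
  finally show "y * (a + t$2 - y) \<le> t$1 * (a + t$2 - t$1)"
    using a by (simp add: divide_le_cancel)
qed

lemma toll_NE_first_order_link2:
  assumes a: "a > 0" and t: "t \<in> toll_NE a"
  shows "1 + t$1 = 2 * t$2"
proof (rule quadratic_local_max)
  note int = toll_NE_interior[OF a t]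
  show "0 < min (t$2) (min (a - (t$1 - t$2)) (1 + (t$1 - t$2)))" using int by simp
  fix z assume "\<bar>z - t$2\<bar> < min (t$2) (min (a - (t$1 - t$2)) (1 + (t$1 - t$2)))"
  then have z: "0 < z" "-1 < t$1 - z" "t$1 - z < a" by auto
  have "z * (1 + t$1 - z) / (1 + a) = profit a 2 (vupd t 2 z)"
    using a z by (simp add: profit_link2_interior)
  also have "\<dots> \<le> profit a 2 t" using toll_NE_best_response[OF t] z by simp
  also have "\<dots> = t$2 * (1 + t$1 - t$2) / (1 + a)" using a int by (simp add: profit_link2_interior)
  finally show "z * (1 + t$1 - z) \<le> t$2 * (1 + t$1 - t$2)"
    using a by (simp add: divide_le_cancel)
qed

definition nash_tolls :: "real \<Rightarrow> real^2" where
  "nash_tolls a = (\<chi> i. if i = 1 then (2*a + 1)/3 else (a + 2)/3)"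

lemma toll_NE_eq_nash_tolls:
  assumes "a > 0" "t \<in> toll_NE a"
  shows "t = nash_tolls a"
proof -
  have "a + t$2 = 2 * t$1" "1 + t$1 = 2 * t$2"
    using toll_NE_first_order_link1[OF assms] toll_NE_first_order_link2[OF assms] .
  then have "t$1 = (2*a + 1)/3" and "t$2 = (a + 2)/3" by simp_all
  then show ?thesis by (simp add: nash_tolls_def vec_eq_iff forall_2)
qed

lemma cost_ratio_nash_tolls:
  assumes "a > 0"
  shows "total_cost a (eq_flow a (nash_tolls a)) / total_cost a (opt_flow a)
         = (a^2 + 7*a + 1) / (9*a)"
proof -
  have diff: "nash_tolls a $ 1 - nash_tolls a $ 2 = (a - 1) / 3"
    by (simp add: nash_tolls_def field_simps)
  have share: "link1_share a ((a - 1) / 3) = (2*a + 1) / (3 * (1 + a))"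
    using assms by (simp add: link1_share_interior field_simps)
  have "total_cost a (eq_flow a (nash_tolls a))
      = total_cost a (split_flow ((2*a + 1) / (3 * (1 + a))))"
    unfolding eq_flow_eq[OF assms] diff share ..
  also have "\<dots> = (a + ((1 - a) / 3)\<^sup>2) / (1 + a)"
  proof -
    have "(1 + a) * ((2*a + 1) / (3 * (1 + a))) - a = (1 - a) / 3"
      using assms by (simp add: field_simps)
    moreover have "a > -1" using assms by simp
    ultimately show ?thesis by (simp only: total_cost_split_flow)
  qed
  also have "\<dots> = (a^2 + 7*a + 1) / (9 * (1 + a))"
    by (simp add: field_simps power2_eq_square)
  finally have eq_cost: "total_cost a (eq_flow a (nash_tolls a)) = (a^2 + 7*a + 1) / (9 * (1 + a))" .
  have opt_cost: "total_cost a (opt_flow a) = a / (1 + a)"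
    using assms by (simp add: opt_flow_eq total_cost_split_flow)
  show ?thesis unfolding eq_cost opt_cost using assms by (simp add: divide_simps)
qed

theorem mainTheorem12:
  fixes a2 :: real
  assumes "a2 > 0"
  shows "(\<forall>t \<in> toll_NE a2. t = (\<chi> i. if i = 1 then (2*a2 + 1)/3 else (a2 + 2)/3))
    \<and> total_cost a2 (eq_flow a2 (\<chi> i. if i = 1 then (2*a2 + 1)/3 else (a2 + 2)/3))
        / total_cost a2 (opt_flow a2) = (a2^2 + 7*a2 + 1) / (9*a2)
    \<and> filterlim (\<lambda>b. total_cost b (eq_flow b (\<chi> i. if i = 1 then (2*b + 1)/3 else (b + 2)/3))
        / total_cost b (opt_flow b)) at_top at_top"
  unfolding nash_tolls_def[symmetric]
proof (intro conjI ballI)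
  show "t = nash_tolls a2" if "t \<in> toll_NE a2" for t
    using toll_NE_eq_nash_tolls[OF assms that] .
  show "total_cost a2 (eq_flow a2 (nash_tolls a2)) / total_cost a2 (opt_flow a2)
        = (a2^2 + 7*a2 + 1) / (9*a2)"
    using cost_ratio_nash_tolls[OF assms] .
  have "eventually (\<lambda>b. (b^2 + 7*b + 1) / (9*b)
      = total_cost b (eq_flow b (nash_tolls b)) / total_cost b (opt_flow b)) at_top"
    using eventually_gt_at_top[of 0] by eventually_elim (simp add: cost_ratio_nash_tolls)
  moreover have "filterlim (\<lambda>b::real. (b^2 + 7*b + 1) / (9*b)) at_top at_top"
    by real_asymp
  ultimately show "filterlim (\<lambda>b. total_cost b (eq_flow b (nash_tolls b))
      / total_cost b (opt_flow b)) at_top at_top"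
    by (rule filterlim_cong[THEN iffD1, OF refl refl])
qed

end
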